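(* Let $\mathrm{G}$ be a non-commutative Lie group belonging to the class $\mathcal{C}$, with Lie algebra $\mathfrak{g}$, and let $\mu$ be a left-invariant pseudo-Riemannian metric on $\mathrm{G}$. Then $\mu$ is flat if and only if the restriction of the inner product $\mu(e)$ to the derived ideal $[\mathfrak{g},\mathfrak{g}]$ is degenerate.
   Context: The class $\mathcal{C}$ consists of the non-commutative Lie groups $\mathrm{G}$ whose Lie algebra $\mathfrak{g}$ satisfies: for all $x,y\in\mathfrak{g}$, the bracket $[x,y]$ is a linear combination of $x$ and $y$. A metric is flat if its Riemann curvature tensor vanishes identically. *)

theory Defs
  imports "HOL-Analysis.Analysis"
begin

definition lie_algebra :: "('a::euclidean_space \<Rightarrow> 'a \<Rightarrow> 'a) \<Rightarrow> bool" where
  "lie_algebra br \<longleftrightarrow> bilinear br \<and> (\<forall>x. br x x = 0) \<and>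
     (\<forall>x y z. br x (br y z) + br y (br z x) + br z (br x y) = 0)"

definition class_C :: "('a::euclidean_space \<Rightarrow> 'a \<Rightarrow> 'a) \<Rightarrow> bool" where
  "class_C br \<longleftrightarrow> (\<exists>x y. br x y \<noteq> 0) \<and>
     (\<forall>x y. \<exists>a b::real. br x y = a *\<^sub>R x + b *\<^sub>R y)"

text \<open>A pseudo-Riemannian inner product (= left-invariant pseudo-Riemannian metric,
identified with its value at the identity): symmetric, bilinear, nondegenerate,
arbitrary signature.\<close>
definition pseudo_inner :: "('a::euclidean_space \<Rightarrow> 'a \<Rightarrow> real) \<Rightarrow> bool" where
  "pseudo_inner g \<longleftrightarrow> bilinear g \<and> (\<forall>u v. g u v = g v u) \<and>
     (\<forall>u. (\<forall>v. g u v = 0) \<longrightarrow> u = 0)"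

text \<open>Levi-Civita connection of the left-invariant metric, restricted to
left-invariant vector fields: bilinear, torsion-free and metric.\<close>
definition levi_civita ::
  "('a::euclidean_space \<Rightarrow> 'a \<Rightarrow> real) \<Rightarrow> ('a \<Rightarrow> 'a \<Rightarrow> 'a) \<Rightarrow> ('a \<Rightarrow> 'a \<Rightarrow> 'a) \<Rightarrow> bool" where
  "levi_civita g br nabla \<longleftrightarrow> bilinear nabla \<and>
     (\<forall>x y. nabla x y - nabla y x = br x y) \<and>
     (\<forall>x y z. g (nabla x y) z + g y (nabla x z) = 0)"

definition curvature ::
  "('a::real_vector \<Rightarrow> 'a \<Rightarrow> 'a) \<Rightarrow> ('a \<Rightarrow> 'a \<Rightarrow> 'a) \<Rightarrow> 'a \<Rightarrow> 'a \<Rightarrow> 'a \<Rightarrow> 'a" where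
  "curvature br nabla x y z = nabla x (nabla y z) - nabla y (nabla x z) - nabla (br x y) z"

text \<open>The left-invariant metric is flat iff the curvature of its Levi-Civita
connection vanishes identically (on left-invariant fields, which suffices).\<close>
definition flat :: "('a::euclidean_space \<Rightarrow> 'a \<Rightarrow> real) \<Rightarrow> ('a \<Rightarrow> 'a \<Rightarrow> 'a) \<Rightarrow> bool" where
  "flat g br \<longleftrightarrow> (\<exists>nabla. levi_civita g br nabla \<and>
     (\<forall>x y z. curvature br nabla x y z = 0))"

definition derived_ideal :: "('a::euclidean_space \<Rightarrow> 'a \<Rightarrow> 'a) \<Rightarrow> 'a set" where
  "derived_ideal br = span {br x y | x y. True}"

definition degenerate_on :: "('a::euclidean_space \<Rightarrow> 'a \<Rightarrow> real) \<Rightarrow> 'a set \<Rightarrow> bool" where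
  "degenerate_on g W \<longleftrightarrow> (\<exists>u\<in>W. u \<noteq> 0 \<and> (\<forall>v\<in>W. g u v = 0))"

end

theory Submission
  imports Defs
begin

text \<open>Since \<open>[x,y]\<close> always lies in the span of \<open>x\<close> and \<open>y\<close>, each \<open>ad x\<close> acts as a scalar
  modulo \<open>x\<close>; comparing \<open>[x,y]\<close> with \<open>-[y,x]\<close> forces \<open>[x,y] = l(x) y - l(y) x\<close> for a
  nonzero linear form \<open>l\<close>, so \<open>[\<g>,\<g>] = ker l\<close>. Writing \<open>l = \<mu>(a,-)\<close>, the Levi-Civita
  connection is \<open>\<nabla>\<^sub>x y = \<mu>(x,y) a - l(y) x\<close>, with curvature
  \<open>R(x,y) z = \<mu>(a,a) (\<mu>(x,z) y - \<mu>(y,z) x)\<close>. So \<open>\<mu>\<close> is flat iff \<open>a\<close> is null, i.e. iff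
  \<open>a \<in> ker l\<close>; and since \<open>a\<close> spans the \<open>\<mu>\<close>-orthogonal of \<open>ker l\<close>, this happens iff
  \<open>\<mu>\<close> is degenerate on \<open>ker l\<close>.\<close>

lemma linear_scalar_on_subspace_if_all_eigen:
  fixes f :: "'a::real_vector \<Rightarrow> 'a"
  assumes lin: "linear f" and W: "subspace W" and eigen: "\<And>w. w \<in> W \<Longrightarrow> \<exists>k. f w = k *\<^sub>R w"
  shows "\<exists>c. \<forall>w\<in>W. f w = c *\<^sub>R w"
proof (cases "W \<subseteq> {0}")
  case True
  then show ?thesis using linear_0[OF lin] by (intro exI[of _ 0]) auto
next
  case False
  then obtain w0 where w0: "w0 \<in> W" "w0 \<noteq> 0" by blast
  obtain c where c: "f w0 = c *\<^sub>R w0" using eigen w0 by blast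
  have "f w = c *\<^sub>R w" if w: "w \<in> W" for w
  proof -
    obtain k where k: "f w = k *\<^sub>R w" using eigen w by blast
    obtain k' where k': "f (w + w0) = k' *\<^sub>R (w + w0)" using eigen W w w0 subspace_add by blast
    have "f (w + w0) = k *\<^sub>R w + c *\<^sub>R w0" using k c linear_add[OF lin] by simp
    then have eq: "(k' - k) *\<^sub>R w = (c - k') *\<^sub>R w0" using k' by (simp add: algebra_simps)
    show ?thesis
    proof (cases "k' = k")
      case True
      then show ?thesis using eq w0 k by simp
    next
      case False
      then have "w = (1 / (k' - k)) *\<^sub>R ((k' - k) *\<^sub>R w)" by simp
      also have "\<dots> = ((c - k') / (k' - k)) *\<^sub>R w0" using eq by simp
      finally show ?thesis using c linear_scale[OF lin] by (simp add: mult.commute)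
    qed
  qed
  then show ?thesis by blast
qed

text \<open>For \<open>x \<noteq> 0\<close> the map \<open>ad x\<close>, followed by the orthogonal projection onto \<open>x\<^sup>\<bottom>\<close>,
  has every vector of \<open>x\<^sup>\<bottom>\<close> as eigenvector, so it is a scalar there.\<close>

lemma bracket_scalar_modulo_line:
  fixes br :: "'a::euclidean_space \<Rightarrow> 'a \<Rightarrow> 'a"
  assumes bl: "bilinear br" and alt: "\<And>x. br x x = 0"
    and span2: "\<And>x y. \<exists>a b. br x y = a *\<^sub>R x + b *\<^sub>R y" and x: "x \<noteq> 0"
  shows "\<exists>c. \<forall>y. \<exists>m. br x y = c *\<^sub>R y + m *\<^sub>R x"
proof -
  define P where "P y = y - ((x \<bullet> y) / (x \<bullet> x)) *\<^sub>R x" for y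
  define W where "W = {y. x \<bullet> y = 0}"
  have linP: "linear P"
    by (rule linearI) (simp_all add: P_def inner_add_right add_divide_distrib algebra_simps)
  have subW: "subspace W" unfolding W_def subspace_def by (simp add: inner_add_right)
  have lin: "linear (P \<circ> br x)"
    using bl linP unfolding bilinear_def by (blast intro: linear_compose)
  have "\<exists>k. (P \<circ> br x) w = k *\<^sub>R w" if w: "w \<in> W" for w
  proof -
    obtain a b where "br x w = a *\<^sub>R x + b *\<^sub>R w" using span2 by blast
    moreover have "P x = 0" "P w = w" using x w by (simp_all add: P_def W_def)
    ultimately show ?thesis using linear_add[OF linP] linear_scale[OF linP] by auto
  qed
  then obtain c where c: "\<And>w. w \<in> W \<Longrightarrow> P (br x w) = c *\<^sub>R w"
    using linear_scalar_on_subspace_if_all_eigen[OF lin subW] by auto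
  have "br x y = c *\<^sub>R y + ((x \<bullet> br x y) / (x \<bullet> x) - c * ((x \<bullet> y) / (x \<bullet> x))) *\<^sub>R x" for y
  proof -
    have "P y \<in> W" using x by (simp add: W_def P_def inner_diff_right)
    moreover have "br x (P y) = br x y"
      unfolding P_def using bilinear_rsub[OF bl] bilinear_rmul[OF bl] alt by simp
    ultimately have "P (br x y) = c *\<^sub>R P y" using c by metis
    then show ?thesis unfolding P_def by (simp add: algebra_simps)
  qed
  then show ?thesis by blast
qed

lemma bilinear_alternating_antisym:
  assumes bl: "bilinear br" and alt: "\<And>x. br x x = 0"
  shows "br y x = - br x y"
proof -
  have "br (x + y) (x + y) = br x x + br x y + (br y x + br y y)"
    by (simp add: bilinear_ladd[OF bl] bilinear_radd[OF bl] algebra_simps)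
  then have "br x y + br y x = 0" by (simp add: alt)
  then show ?thesis by (simp add: eq_neg_iff_add_eq_0 add.commute)
qed

lemma scaleR_combination_eq_0_not_collinear:
  fixes x y :: "'a::real_vector"
  assumes "x \<noteq> 0" and "\<And>t. y \<noteq> t *\<^sub>R x" and "\<alpha> *\<^sub>R y + \<beta> *\<^sub>R x = 0"
  shows "\<alpha> = 0" "\<beta> = 0"
proof -
  show \<alpha>: "\<alpha> = 0"
  proof (rule ccontr)
    assume "\<alpha> \<noteq> 0"
    have "\<alpha> *\<^sub>R y = - \<beta> *\<^sub>R x" using assms(3) by (simp add: eq_neg_iff_add_eq_0)
    have "y = (1 / \<alpha>) *\<^sub>R (\<alpha> *\<^sub>R y)" using \<open>\<alpha> \<noteq> 0\<close> by simp
    also have "\<dots> = (- \<beta> / \<alpha>) *\<^sub>R x" using \<open>\<alpha> *\<^sub>R y = - \<beta> *\<^sub>R x\<close> by simp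
    finally show False using assms(2) by blast
  qed
  then show "\<beta> = 0" using assms(1,3) by simp
qed

lemma exists_not_collinear_if_bracket_nonzero:
  fixes br :: "'a::real_vector \<Rightarrow> 'a \<Rightarrow> 'b::real_vector" and x :: 'a
  assumes bl: "bilinear br" and alt: "\<And>x. br x x = 0" and nz: "br x0 y0 \<noteq> 0"
  shows "\<exists>z. \<forall>t. z \<noteq> t *\<^sub>R x"
proof (rule ccontr)
  assume "\<nexists>z. \<forall>t. z \<noteq> t *\<^sub>R x"
  then obtain a b where "x0 = a *\<^sub>R x" "y0 = b *\<^sub>R x" by blast
  then have "br x0 y0 = (a * b) *\<^sub>R br x x" using bilinear_lmul[OF bl] bilinear_rmul[OF bl] by simp
  then show False using nz alt by simp
qed

lemma bracket_eq_if_not_collinear: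
  assumes bl: "bilinear br" and alt: "\<And>x. br x x = 0"
    and C: "\<And>x y. x \<noteq> 0 \<Longrightarrow> \<exists>m. br x y = C x *\<^sub>R y + m *\<^sub>R x"
    and x: "x \<noteq> 0" and xy: "\<And>t. y \<noteq> t *\<^sub>R x"
  shows "br x y = C x *\<^sub>R y - C y *\<^sub>R x"
proof -
  have y: "y \<noteq> 0" using xy[of 0] by simp
  obtain m where m: "br x y = C x *\<^sub>R y + m *\<^sub>R x" using C x by blast
  obtain m' where m': "br y x = C y *\<^sub>R x + m' *\<^sub>R y" using C y by blast
  have "br x y + br y x = 0" using bilinear_alternating_antisym[OF bl alt, of x y] by simp
  then have "(C x + m') *\<^sub>R y + (m + C y) *\<^sub>R x = 0"
    unfolding m m' by (simp add: algebra_simps)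
  then have "m + C y = 0" by (rule scaleR_combination_eq_0_not_collinear(2)[OF x xy])
  then show ?thesis using m by (simp add: eq_neg_iff_add_eq_0 flip: scaleR_left_distrib)
qed

lemma linear_if_bracket_eq:
  assumes bl: "bilinear br" and br: "\<And>x y. br x y = l x *\<^sub>R y - l y *\<^sub>R x"
    and nz: "br x0 y0 \<noteq> 0"
  shows "linear l"
proof (rule linearI)
  have x0: "x0 \<noteq> 0" using nz bilinear_lzero[OF bl] by auto
  fix u v c
  have "(l (u + v) - l u - l v) *\<^sub>R x0 = 0"
    using bilinear_ladd[OF bl, of u v x0] unfolding br by (simp add: algebra_simps)
  then show "l (u + v) = l u + l v" using x0 by simp
  have "(l (c *\<^sub>R u) - c * l u) *\<^sub>R x0 = 0"
    using bilinear_lmul[OF bl, of c u x0] unfolding br by (simp add: algebra_simps)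
  then show "l (c *\<^sub>R u) = c *\<^sub>R l u" using x0 by simp
qed

lemma class_C_bracket_form:
  fixes br :: "'a::euclidean_space \<Rightarrow> 'a \<Rightarrow> 'a"
  assumes bl: "bilinear br" and alt: "\<And>x. br x x = 0" and C: "class_C br"
  obtains l where "linear l" and "\<And>x y. br x y = l x *\<^sub>R y - l y *\<^sub>R x"
proof -
  obtain x0 y0 where nz: "br x0 y0 \<noteq> 0" using C unfolding class_C_def by blast
  have "\<forall>x. \<exists>c. x \<noteq> 0 \<longrightarrow> (\<forall>y. \<exists>m. br x y = c *\<^sub>R y + m *\<^sub>R x)"
    using bracket_scalar_modulo_line[OF bl alt] C unfolding class_C_def by blast
  then obtain c where c: "\<And>x y. x \<noteq> 0 \<Longrightarrow> \<exists>m. br x y = c x *\<^sub>R y + m *\<^sub>R x" by metis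
  have not_collinear: "br x y = c x *\<^sub>R y - c y *\<^sub>R x" if "x \<noteq> 0" "\<And>t. y \<noteq> t *\<^sub>R x" for x y
    by (rule bracket_eq_if_not_collinear[OF bl alt]) (use c that in auto)
  have nonzero: "br x y = c x *\<^sub>R y - c y *\<^sub>R x" if x: "x \<noteq> 0" and y: "y \<noteq> 0" for x y
  proof (cases "\<forall>t. y \<noteq> t *\<^sub>R x")
    case True
    then show ?thesis using not_collinear x by blast
  next
    case False
    then obtain t where t: "y = t *\<^sub>R x" by blast
    obtain z where z: "\<And>s. z \<noteq> s *\<^sub>R x" using exists_not_collinear_if_bracket_nonzero[OF bl alt nz] by blast
    have zy: "z \<noteq> s *\<^sub>R y" for s using z[of "s * t"] t by simp
    have "c y *\<^sub>R z - c z *\<^sub>R y = t *\<^sub>R (c x *\<^sub>R z - c z *\<^sub>R x)"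
      using bilinear_lmul[OF bl, of t x z] not_collinear[OF y zy] not_collinear[OF x z] t by simp
    then have "(c y - t * c x) *\<^sub>R z = 0" using t by (simp add: algebra_simps)
    moreover have "z \<noteq> 0" using z[of 0] by simp
    ultimately have "c y = t * c x" by simp
    moreover have "br x y = 0" using t bilinear_rmul[OF bl] alt by simp
    ultimately show ?thesis using t by simp
  qed
  define l where "l x = (if x = 0 then 0 else c x)" for x
  have br: "br x y = l x *\<^sub>R y - l y *\<^sub>R x" for x y
    using nonzero[of x y] bilinear_lzero[OF bl] bilinear_rzero[OF bl] unfolding l_def by auto
  show thesis using that linear_if_bracket_eq[OF bl br nz] br by blast
qed

lemma pseudo_inner_represents_linear:
  fixes g :: "'a::euclidean_space \<Rightarrow> 'a \<Rightarrow> real"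
  assumes g: "pseudo_inner g" and l: "linear l"
  obtains a where "\<And>v. g a v = l v"
proof -
  have bl: "bilinear g" and nd: "\<And>u. (\<forall>v. g u v = 0) \<Longrightarrow> u = 0"
    using g unfolding pseudo_inner_def by auto
  define G where "G u = adjoint (g u) (1::real)" for u
  have G: "g u v = v \<bullet> G u" for u v
    using bl adjoint_works[of "g u" v 1] unfolding G_def bilinear_def by simp
  have linG: "linear G"
  proof (rule linearI)
    fix x y c
    show "G (x + y) = G x + G y"
      by (rule vector_eq_ldot[THEN iffD1]) (metis G bilinear_ladd[OF bl] inner_add_right)
    show "G (c *\<^sub>R x) = c *\<^sub>R G x"
      by (rule vector_eq_ldot[THEN iffD1]) (metis G bilinear_lmul[OF bl] inner_scaleR_right real_scaleR_def)
  qed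
  have "inj G"
  proof (rule injI)
    fix x y assume "G x = G y"
    then have "\<forall>v. g (x - y) v = 0" using G bilinear_lsub[OF bl] by simp
    then show "x = y" using nd by fastforce
  qed
  then have "surj G" using linear_injective_imp_surjective linG by blast
  obtain w where w: "l v = v \<bullet> w" for v
    using adjoint_works[OF l, of _ 1] by (metis mult.right_neutral inner_real_def)
  obtain a where "G a = w" using \<open>surj G\<close> by (metis surjD)
  then show thesis using that G w by metis
qed

text \<open>The difference \<open>D\<close> of two such connections is symmetric, while \<open>g (D x y) z\<close> is
  skew in \<open>y, z\<close>; alternating the two symmetries six times changes its sign.\<close>

lemma levi_civita_unique:
  assumes g: "pseudo_inner g" and n1: "levi_civita g br n1" and n2: "levi_civita g br n2"
  shows "n1 = n2"
proof -
  have bl: "bilinear g" and sym: "\<And>u v. g u v = g v u" and nd: "\<And>u. (\<forall>v. g u v = 0) \<Longrightarrow> u = 0"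
    using g unfolding pseudo_inner_def by auto
  define D where "D x y = n1 x y - n2 x y" for x y
  have D_sym: "D x y = D y x" for x y
  proof -
    have "n1 x y - n1 y x = n2 x y - n2 y x" using n1 n2 unfolding levi_civita_def by simp
    moreover have "D x y - D y x = (n1 x y - n1 y x) - (n2 x y - n2 y x)"
      unfolding D_def by (simp add: algebra_simps)
    ultimately show ?thesis by simp
  qed
  have D_skew: "g (D x y) z = - g (D x z) y" for x y z
  proof -
    have "g (n1 x y) z + g y (n1 x z) = 0" "g (n2 x y) z + g y (n2 x z) = 0"
      using n1 n2 unfolding levi_civita_def by blast+
    then show ?thesis
      unfolding D_def bilinear_lsub[OF bl] using sym[of y] by (simp add: algebra_simps)
  qed
  have "g (D x y) z = 0" for x y z
  proof -
    have "g (D x y) z = - g (D z x) y" using D_skew[of x y z] D_sym[of x z] by simp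
    also have "\<dots> = g (D z y) x" using D_skew[of z x y] by simp
    also have "\<dots> = - g (D y x) z" using D_skew[of y z x] D_sym[of y z] by simp
    finally show ?thesis using D_sym by simp
  qed
  then have "D x y = 0" for x y using nd by blast
  then show ?thesis unfolding D_def by (auto simp: fun_eq_iff)
qed

locale class_C_metric =
  fixes br :: "'a::euclidean_space \<Rightarrow> 'a \<Rightarrow> 'a" and l :: "'a \<Rightarrow> real"
    and g :: "'a \<Rightarrow> 'a \<Rightarrow> real" and a :: 'a
  assumes linear_l: "linear l"
    and bracket: "br x y = l x *\<^sub>R y - l y *\<^sub>R x"
    and nonabelian: "\<exists>x y. br x y \<noteq> 0"
    and pseudo_inner: "pseudo_inner g"
    and dual: "g a v = l v"
begin

lemma g_bilinear: "bilinear g" and g_sym: "g u v = g v u"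
  and g_nondegenerate: "(\<And>v. g u v = 0) \<Longrightarrow> u = 0"
  using pseudo_inner unfolding pseudo_inner_def by blast+

lemma dual_right: "g v a = l v"
  using dual g_sym by metis

lemma l_diff [simp]: "l (v - w) = l v - l w"
  and l_scaleR [simp]: "l (c *\<^sub>R v) = c * l v"
  using linear_diff[OF linear_l] linear_scale[OF linear_l] by simp_all

lemma g_diff_left [simp]: "g (v - w) u = g v u - g w u"
  and g_diff_right [simp]: "g u (v - w) = g u v - g u w"
  and g_scaleR_left [simp]: "g (c *\<^sub>R v) u = c * g v u"
  and g_scaleR_right [simp]: "g u (c *\<^sub>R v) = c * g u v"
  using g_bilinear by (simp_all add: bilinear_lsub bilinear_rsub bilinear_lmul bilinear_rmul)

lemma l_bracket: "l (br x y) = 0"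
  unfolding bracket by simp

lemma exists_l_eq_1:
  obtains e where "l e = 1"
proof -
  obtain x y where "br x y \<noteq> 0" using nonabelian by blast
  then have "l x \<noteq> 0 \<or> l y \<noteq> 0" unfolding bracket by auto
  then obtain u where "l u \<noteq> 0" by blast
  then have "l ((1 / l u) *\<^sub>R u) = 1" using linear_scale[OF linear_l] by simp
  then show thesis by (rule that)
qed

lemma derived_ideal_eq_kernel: "derived_ideal br = {v. l v = 0}"
proof
  show "derived_ideal br \<subseteq> {v. l v = 0}" unfolding derived_ideal_def
    by (rule span_minimal)
      (auto simp: l_bracket subspace_def linear_0[OF linear_l] linear_add[OF linear_l] linear_scale[OF linear_l])
  obtain e where e: "l e = 1" by (rule exists_l_eq_1)
  show "{v. l v = 0} \<subseteq> derived_ideal br"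
  proof
    fix v assume "v \<in> {v. l v = 0}"
    then have "v = br e v" unfolding bracket using e by simp
    then show "v \<in> derived_ideal br" unfolding derived_ideal_def by (metis (mono_tags) mem_Collect_eq span_base)
  qed
qed

text \<open>A vector \<open>u\<close> of the hyperplane \<open>ker l\<close> orthogonal to \<open>ker l\<close> has \<open>g u\<close> proportional
  to \<open>l = g a\<close>, so by nondegeneracy \<open>u\<close> is a nonzero multiple of \<open>a\<close>.\<close>

lemma degenerate_on_kernel_iff: "degenerate_on g {v. l v = 0} \<longleftrightarrow> g a a = 0"
proof
  obtain e where e: "l e = 1" by (rule exists_l_eq_1)
  assume "degenerate_on g {v. l v = 0}"
  then obtain u where u: "l u = 0" "u \<noteq> 0" and orth: "\<And>v. l v = 0 \<Longrightarrow> g u v = 0"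
    unfolding degenerate_on_def by blast
  define k where "k = g u e"
  have gu: "g u v = k * l v" for v
    using orth[of "v - l v *\<^sub>R e"] e unfolding k_def by simp
  have "k \<noteq> 0" using g_nondegenerate u gu by fastforce
  have "g (u - k *\<^sub>R a) v = 0" for v using gu dual by simp
  then have "u = k *\<^sub>R a" using g_nondegenerate by fastforce
  then have "k * l a = 0" using u linear_scale[OF linear_l] by simp
  then show "g a a = 0" using \<open>k \<noteq> 0\<close> dual by simp
next
  obtain e where e: "l e = 1" by (rule exists_l_eq_1)
  then have "a \<noteq> 0" using dual[of e] bilinear_lzero[OF g_bilinear] by auto
  moreover assume "g a a = 0"
  ultimately show "degenerate_on g {v. l v = 0}"
    unfolding degenerate_on_def using dual by auto
qed

definition connection :: "'a \<Rightarrow> 'a \<Rightarrow> 'a" where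
  "connection x y = g x y *\<^sub>R a - l y *\<^sub>R x"

lemma levi_civita_connection: "levi_civita g br connection"
  unfolding levi_civita_def
proof (intro conjI allI)
  show "bilinear connection" unfolding bilinear_def connection_def
  proof (intro conjI allI)
    fix x show "linear (\<lambda>y. g x y *\<^sub>R a - l y *\<^sub>R x)"
      by (rule linearI) (simp_all add: bilinear_radd[OF g_bilinear] bilinear_rmul[OF g_bilinear]
          linear_add[OF linear_l] linear_scale[OF linear_l] algebra_simps)
  next
    fix y show "linear (\<lambda>x. g x y *\<^sub>R a - l y *\<^sub>R x)"
      by (rule linearI) (simp_all add: bilinear_ladd[OF g_bilinear] bilinear_lmul[OF g_bilinear] algebra_simps)
  qed
next
  fix x y z
  show "connection x y - connection y x = br x y"
    unfolding connection_def bracket by (simp add: g_sym[of y x] algebra_simps)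
  show "g (connection x y) z + g y (connection x z) = 0"
    unfolding connection_def using dual dual_right g_sym[of y x] g_sym[of x z] by (simp add: algebra_simps)
qed

lemma curvature_connection:
  "curvature br connection x y z = g a a *\<^sub>R (g x z *\<^sub>R y - g y z *\<^sub>R x)"
  unfolding curvature_def connection_def bracket
  by (simp add: dual dual_right algebra_simps g_sym[of y x] g_sym[of z x] g_sym[of z y])

lemma flat_iff_dual_null: "flat g br \<longleftrightarrow> g a a = 0"
proof -
  have "flat g br \<longleftrightarrow> (\<forall>x y z. curvature br connection x y z = 0)"
    unfolding flat_def
    using levi_civita_connection levi_civita_unique[OF pseudo_inner] by metis
  also have "\<dots> \<longleftrightarrow> g a a = 0"
  proof
    assume flat: "\<forall>x y z. curvature br connection x y z = 0"
    obtain e where e: "l e = 1" by (rule exists_l_eq_1)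
    obtain x0 y0 where "br x0 y0 \<noteq> 0" using nonabelian by blast
    define y where "y = br x0 y0"
    have y: "y \<noteq> 0" "l y = 0" unfolding y_def using \<open>br x0 y0 \<noteq> 0\<close> l_bracket by auto
    obtain z where z: "g e z \<noteq> 0" using g_nondegenerate e linear_0[OF linear_l] by force
    show "g a a = 0"
    proof (rule ccontr)
      assume "g a a \<noteq> 0"
      then have w: "g e z *\<^sub>R y - g y z *\<^sub>R e = 0"
        using flat curvature_connection[of e y z] by simp
      then have "l (g e z *\<^sub>R y - g y z *\<^sub>R e) = 0" using linear_0[OF linear_l] by simp
      then have "g y z = 0" using y e by simp
      then show False using w y z by simp
    qed
  qed (simp add: curvature_connection)
  finally show ?thesis .
qed

end

theorem theorem1p4:
  fixes br :: "'a::euclidean_space \<Rightarrow> 'a \<Rightarrow> 'a"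
    and g :: "'a \<Rightarrow> 'a \<Rightarrow> real"
  assumes "lie_algebra br"
    and "class_C br"
    and "pseudo_inner g"
  shows "flat g br \<longleftrightarrow> degenerate_on g (derived_ideal br)"
proof -
  have bl: "bilinear br" and alt: "\<And>x. br x x = 0"
    using assms(1) unfolding lie_algebra_def by blast+
  obtain l where l: "linear l" and br: "\<And>x y. br x y = l x *\<^sub>R y - l y *\<^sub>R x"
    using class_C_bracket_form[OF bl alt assms(2)] by blast
  obtain a where a: "\<And>v. g a v = l v"
    using pseudo_inner_represents_linear[OF assms(3) l] by blast
  interpret class_C_metric br l g a
    using assms(2) unfolding class_C_def by (intro class_C_metric.intro[OF l br _ assms(3) a]) blast
  show ?thesis
    using flat_iff_dual_null degenerate_on_kernel_iff derived_ideal_eq_kernel by simp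
qed

end
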